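(* Let $\xi$ be an anti-involution of $\Lambda$ and let $M$ be a discriminant mirror with $M\cap H^4_\xi\neq\emptyset$. Then either (1) $M\cap H^4_\xi$ is a copy of $H^3$, namely $H^4_\xi\cap r^\perp$ for a root $r$ of $\Lambda^\xi$ of norm $1$ or $3$; or (2) $M\cap H^4_\xi$ is a copy of $H^2$, namely $H^4_\xi\cap R^\perp$ for a $G_2$ root system $R$ in $\Lambda^\xi$. Conversely, if $r$ is a root of norm $1$ or $3$ in $\Lambda^\xi$ (resp. $R$ is a $G_2$ root system in $\Lambda^\xi$), then $H^4_\xi\cap r^\perp$ (resp. $H^4_\xi\cap R^\perp$) is the intersection of $H^4_\xi$ with some discriminant mirror.
   Context: Let $\omega=e^{2\pi i/3}$, $\mathcal{E}=\mathbb{Z}[\omega]$, $\theta=\sqrt{-3}$. Let $\Lambda=\mathcal{E}^5$ with Hermitian form $h(x,y)=-x_0\bar y_0+x_1\bar y_1+\dots+x_4\bar y_4$; the norm of $x$ is $h(x,x)$. $\mathbb{C}H^4$ is the set of negative lines in $\Lambda\otimes_{\mathcal{E}}\mathbb{C}$. An anti-involution of $\Lambda$ is an additive bijection $\xi$ with $\xi(ax)=\bar a\xi(x)$, $\xi^2=\mathrm{id}$, $h(\xi x,\xi y)=\overline{h(x,y)}$; $H^4_\xi$ is the fixed-point set of $\xi$ in $\mathbb{C}H^4$ (a copy of real hyperbolic $4$-space), and $\Lambda^\xi$ is the $\mathbb{Z}$-lattice of $\xi$-fixed vectors. A discriminant mirror is a hyperplane $r^\perp\subset\mathbb{C}H^4$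 with $r\in\Lambda$ of norm $1$. A root of $\Lambda^\xi$ is a vector of $\Lambda^\xi$ of norm $1$ or $2$, or a vector of $\Lambda^\xi$ of norm $3$ or $6$ that is divisible by $\theta$ in $\Lambda$. A $G_2$ root system in $\Lambda^\xi$ is a set of six roots of norm $2$ and six roots of norm $6$ of $\Lambda^\xi$, all lying in a two-dimensional sublattice of $\Lambda^\xi$; for a set $R$ of vectors, $R^\perp$ denotes the set of points of $\mathbb{C}H^4$ orthogonal to all of them. *)

theory Defs
  imports "HOL-Analysis.Analysis" "HOL-Library.Numeral_Type"
begin

type_synonym cvec = "complex ^ 5"

definition omega :: complex where
  "omega = cis (2 * pi / 3)"

definition theta :: complex where
  "theta = \<i> * complex_of_real (sqrt 3)"

definition eis :: "complex set" where
  "eis = {of_int a + of_int b * omega | a b. True}"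

definition Lam :: "cvec set" where
  "Lam = {x. \<forall>i. x $ i \<in> eis}"

definition herm :: "cvec \<Rightarrow> cvec \<Rightarrow> complex" where
  "herm x y = - (x $ 0) * cnj (y $ 0) + (\<Sum>i\<in>UNIV - {0::5}. x $ i * cnj (y $ i))"

definition anti_involution :: "(cvec \<Rightarrow> cvec) \<Rightarrow> bool" where
  "anti_involution xi \<longleftrightarrow>
     bij_betw xi Lam Lam \<and>
     (\<forall>x\<in>Lam. \<forall>y\<in>Lam. xi (x + y) = xi x + xi y) \<and>
     (\<forall>a\<in>eis. \<forall>x\<in>Lam. xi (a *s x) = cnj a *s xi x) \<and>
     (\<forall>x\<in>Lam. xi (xi x) = x) \<and>
     (\<forall>x\<in>Lam. \<forall>y\<in>Lam. herm (xi x) (xi y) = cnj (herm x y))"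

text \<open>The complex-antilinear extension of xi to Lambda tensor C = C^5.\<close>
definition xiC :: "(cvec \<Rightarrow> cvec) \<Rightarrow> cvec \<Rightarrow> cvec" where
  "xiC xi v = (\<Sum>i\<in>UNIV. cnj (v $ i) *s xi (axis i 1))"

definition cline :: "cvec \<Rightarrow> cvec set" where
  "cline v = {c *s v | c. True}"

definition CH4 :: "cvec set set" where
  "CH4 = {cline v | v. Re (herm v v) < 0}"

definition Hxi :: "(cvec \<Rightarrow> cvec) \<Rightarrow> cvec set set" where
  "Hxi xi = {L \<in> CH4. xiC xi ` L = L}"

definition Lam_fix :: "(cvec \<Rightarrow> cvec) \<Rightarrow> cvec set" where
  "Lam_fix xi = {x \<in> Lam. xi x = x}"

definition perp :: "cvec set \<Rightarrow> cvec set set" where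
  "perp R = {L \<in> CH4. \<forall>v\<in>L. \<forall>r\<in>R. herm v r = 0}"

definition discriminant_mirror :: "cvec set set \<Rightarrow> bool" where
  "discriminant_mirror M \<longleftrightarrow> (\<exists>r\<in>Lam. herm r r = 1 \<and> M = perp {r})"

definition lat_root :: "(cvec \<Rightarrow> cvec) \<Rightarrow> cvec \<Rightarrow> bool" where
  "lat_root xi x \<longleftrightarrow> x \<in> Lam_fix xi \<and>
     (herm x x = 1 \<or> herm x x = 2 \<or>
      ((herm x x = 3 \<or> herm x x = 6) \<and> (\<exists>y\<in>Lam. x = theta *s y)))"

definition G2_root_system :: "(cvec \<Rightarrow> cvec) \<Rightarrow> cvec set \<Rightarrow> bool" where
  "G2_root_system xi R \<longleftrightarrow>
     (\<forall>r\<in>R. lat_root xi r \<and> (herm r r = 2 \<or> herm r r = 6)) \<and>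
     card {r\<in>R. herm r r = 2} = 6 \<and> card {r\<in>R. herm r r = 6} = 6 \<and>
     (\<exists>u\<in>Lam_fix xi. \<exists>w\<in>Lam_fix xi.
        R \<subseteq> {of_int a *s u + of_int b *s w | a b. True})"

end

theory Submission
  imports Defs
begin

text \<open>The form has signature \<open>(1,4)\<close>, so a point of \<open>H\<^sup>4\<^sub>\<xi> \<inter> r\<^sup>\<bottom>\<close> forces the lattice spanned by \<open>r\<close> and
  \<open>\<xi>r\<close> to be positive definite: either \<open>\<xi>r = \<lambda>r\<close> or \<open>|h(r, \<xi>r)| < 1\<close>, i.e. \<open>h(r, \<xi>r) = 0\<close> in the
  Eisenstein integers. In the first case \<open>\<lambda> = \<pm>e\<^sup>2\<close> for a unit \<open>e\<close> and \<open>e r\<close> or \<open>\<theta>e r\<close> is a \<open>\<xi>\<close>-fixed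
  root with the same mirror. In the second, the fixed vectors \<open>a r + cnj a \<xi>r\<close> with \<open>a\<close> a unit or \<open>\<theta>\<close>
  times a unit form a \<open>G\<^sub>2\<close> root system cutting out the same \<open>H\<^sup>2\<close>.

  Conversely, a \<open>G\<^sub>2\<close> root system whose orthogonal complement meets \<open>H\<^sup>4\<^sub>\<xi>\<close> contains fixed roots \<open>a\<close>
  of norm 2 and \<open>b = \<theta>y\<close> of norm 6 with \<open>h(a,b) = \<pm>3\<close>, and \<open>a \<pm> \<omega>\<^sup>2y\<close> is a norm-1 vector with the
  same trace on \<open>H\<^sup>4\<^sub>\<xi>\<close>. If the complement misses \<open>H\<^sup>4\<^sub>\<xi>\<close>, any mirror with \<open>|h(r, \<xi>r)| > 1\<close>
  does too, and such mirrors exist.\<close>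

lemma UNIV_5: "(UNIV :: 5 set) = {0, 1, 2, 3, 4}"
proof -
  have "x \<in> {0, 1, 2, 3, 4}" for x :: 5
  proof (induct x)
    case (of_int z)
    then have "z = 0 \<or> z = 1 \<or> z = 2 \<or> z = 3 \<or> z = 4" by auto
    then show ?case by auto
  qed
  then show ?thesis by auto
qed

lemma cvec_eq_iff:
  "(x::cvec) = y \<longleftrightarrow> x$0 = y$0 \<and> x$1 = y$1 \<and> x$2 = y$2 \<and> x$3 = y$3 \<and> x$4 = y$4"
proof -
  have "(\<forall>i::5. P i) \<longleftrightarrow> P 0 \<and> P 1 \<and> P 2 \<and> P 3 \<and> P 4" for P
    using UNIV_5 by (metis UNIV_I insertE empty_iff)
  then show ?thesis by (simp add: vec_eq_iff)
qed

lemma sum_UNIV_5: "(\<Sum>i\<in>(UNIV::5 set). f i) = f 0 + f 1 + f 2 + f 3 + f 4"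
  by (subst UNIV_5, (subst sum.insert, simp, simp)+) (simp add: add.assoc)

lemma cvec_axis_decomp:
  "(x::cvec) = x$0 *s axis 0 1 + x$1 *s axis 1 1 + x$2 *s axis 2 1 + x$3 *s axis 3 1 + x$4 *s axis 4 1"
  by (simp add: cvec_eq_iff axis_def)

lemma herm_expand:
  "herm x y = - (x$0 * cnj (y$0)) + x$1 * cnj (y$1) + x$2 * cnj (y$2) + x$3 * cnj (y$3) + x$4 * cnj (y$4)"
proof -
  have "UNIV - {0::5} = {1, 2, 3, 4}" using UNIV_5 by auto
  then show ?thesis unfolding herm_def by (simp add: algebra_simps)
qed

lemma herm_axis: "herm (axis i 1) (axis j 1) = (if i = j then (if i = 0 then -1 else 1) else 0)"
proof -
  have "i \<in> {0, 1, 2, 3, 4}" "j \<in> {0, 1, 2, 3, 4}" using UNIV_5 by blast+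
  then show ?thesis by (auto simp: herm_expand axis_def)
qed

subsection \<open>Eisenstein integers\<close>

lemma omega_eq: "omega = Complex (-1/2) (sqrt 3 / 2)"
proof -
  have "cos (2*pi/3) = - cos (pi/3)"
    using cos_pi_minus[of "pi/3"] by (simp add: field_simps)
  moreover have "sin (2*pi/3) = sin (pi/3)"
    using sin_pi_minus[of "pi/3"] by (simp add: field_simps)
  ultimately show ?thesis unfolding omega_def by (simp add: cis.ctr cos_60 sin_60)
qed

lemma theta_eq: "theta = Complex 0 (sqrt 3)"
  unfolding theta_def by (simp add: complex_eq_iff)

lemma omega_sq: "omega * omega = -1 - omega"
  by (simp add: omega_eq complex_eq_iff field_simps)

lemma cnj_omega: "cnj omega = -1 - omega"
  by (simp add: omega_eq complex_eq_iff)

lemma omega_cnj_omega: "omega * cnj omega = 1"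
  by (simp add: omega_eq complex_eq_iff field_simps)

lemma theta_omega: "theta = 1 + 2 * omega"
  by (simp add: omega_eq theta_eq complex_eq_iff)

lemma cnj_theta: "cnj theta = - theta"
  by (simp add: theta_eq complex_eq_iff)

lemma theta_sq: "theta * theta = -3"
  by (simp add: theta_eq complex_eq_iff)

lemma theta_cnj_theta: "theta * cnj theta = 3"
  by (simp add: cnj_theta theta_sq)

lemma theta_neq_0: "theta \<noteq> 0"
  by (simp add: theta_eq complex_eq_iff)

lemma eis_iff: "z \<in> eis \<longleftrightarrow> (\<exists>a b. z = of_int a + of_int b * omega)"
  unfolding eis_def by auto

lemma eis_of_int [simp]: "of_int a \<in> eis"
  unfolding eis_iff by (rule exI[of _ a], rule exI[of _ 0]) simp

lemma eis_0 [simp]: "0 \<in> eis" and eis_1 [simp]: "1 \<in> eis"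
  using eis_of_int[of 0] eis_of_int[of 1] by simp_all

lemma eis_omega [simp]: "omega \<in> eis"
  unfolding eis_iff by (rule exI[of _ 0], rule exI[of _ 1]) simp

lemma eis_add [simp]: "z \<in> eis \<Longrightarrow> w \<in> eis \<Longrightarrow> z + w \<in> eis"
  unfolding eis_iff by (auto, rule_tac x="a+aa" in exI, rule_tac x="b+ba" in exI, simp add: algebra_simps)

lemma eis_uminus [simp]: "z \<in> eis \<Longrightarrow> - z \<in> eis"
  unfolding eis_iff by (auto, rule_tac x="-a" in exI, rule_tac x="-b" in exI, simp add: algebra_simps)

lemma eis_diff [simp]: "z \<in> eis \<Longrightarrow> w \<in> eis \<Longrightarrow> z - w \<in> eis"
  using eis_add[of z "-w"] by simp

lemma eis_mult [simp]:
  assumes "z \<in> eis" "w \<in> eis" shows "z * w \<in> eis"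
proof -
  obtain a b c d where z: "z = of_int a + of_int b * omega" and w: "w = of_int c + of_int d * omega"
    using assms unfolding eis_iff by auto
  have "z * w = of_int (a*c - b*d) + of_int (a*d + b*c - b*d) * omega"
    unfolding z w of_int_mult of_int_diff of_int_add using omega_sq by algebra
  then show ?thesis unfolding eis_iff by blast
qed

lemma eis_cnj [simp]:
  assumes "z \<in> eis" shows "cnj z \<in> eis"
proof -
  obtain a b where z: "z = of_int a + of_int b * omega" using assms unfolding eis_iff by auto
  have "cnj z = of_int (a - b) + of_int (-b) * omega" unfolding z by (simp add: cnj_omega algebra_simps)
  then show ?thesis unfolding eis_iff by blast
qed

lemma eis_theta [simp]: "theta \<in> eis"
  unfolding theta_omega eis_iff by (rule exI[of _ 1], rule exI[of _ 2]) simp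

lemma eis_norm_form:
  assumes "z = of_int a + of_int b * omega"
  shows "z * cnj z = of_int (a*a - a*b + b*b)"
  unfolding assms complex_cnj_add complex_cnj_mult complex_cnj_of_int of_int_mult of_int_diff of_int_add
  using omega_sq cnj_omega by algebra

lemma eis_cmod_ge_1:
  assumes "z \<in> eis" "z \<noteq> 0" shows "1 \<le> cmod z"
proof -
  obtain a b where "z = of_int a + of_int b * omega" using assms(1) unfolding eis_iff by auto
  then have "complex_of_real ((cmod z)^2) = of_int (a*a - a*b + b*b)"
    using eis_norm_form complex_norm_square by metis
  then have n: "(cmod z)^2 = of_int (a*a - a*b + b*b)"
    by (metis of_real_eq_iff of_real_of_int_eq)
  have "4*(a*a - a*b + b*b) = (2*a-b)^2 + 3*b^2" by algebra
  then have "0 \<le> a*a - a*b + b*b" by (smt (verit) zero_le_power2)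
  moreover have "a*a - a*b + b*b \<noteq> 0" using n assms(2) by (metis of_int_0 zero_eq_power2 norm_eq_zero)
  ultimately have "1 \<le> (cmod z)^2" using n by linarith
  then show ?thesis using power2_le_imp_le[of 1 "cmod z"] by simp
qed

lemma eis_unit_norm_form_cases:
  fixes a b :: int
  assumes "a*a - a*b + b*b = 1"
  shows "(a = 1 \<and> b = 0) \<or> (a = -1 \<and> b = 0) \<or> (a = 0 \<and> b = 1) \<or> (a = 0 \<and> b = -1)
    \<or> (a = 1 \<and> b = 1) \<or> (a = -1 \<and> b = -1)"
proof -
  have "4 = (2*a-b)^2 + 3*b^2" "4 = (2*b-a)^2 + 3*a^2" using assms by algebra+
  then have "b^2 \<le> 1" "a^2 \<le> 1" by (smt (verit) zero_le_power2)+
  then have "a \<in> {-1, 0, 1}" "b \<in> {-1, 0, 1}" unfolding abs_square_le_1 by auto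
  then show ?thesis using assms by auto
qed

lemma eis_unit_square:
  assumes "u \<in> eis" "u * cnj u = 1"
  shows "\<exists>e\<in>eis. e * cnj e = 1 \<and> (u = e * e \<or> u = - (e * e))"
proof -
  obtain a b where ab: "u = of_int a + of_int b * omega" using assms(1) unfolding eis_iff by auto
  then have "a*a - a*b + b*b = 1" using eis_norm_form assms(2) by (metis of_int_eq_1_iff)
  then consider "u = 1" | "u = -1" | "u = omega" | "u = - omega" | "u = 1 + omega" | "u = -1 - omega"
    using eis_unit_norm_form_cases ab by fastforce
  moreover have om2: "omega * omega \<in> eis" "omega * omega * cnj (omega * omega) = 1"
    "omega * omega * (omega * omega) = omega" "1 + omega = - (omega * omega)" "-1 - omega = omega * omega"
    using omega_sq by (simp, (simp_all add: omega_eq complex_eq_iff field_simps)[4])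
  ultimately show ?thesis
  proof cases
    case 1 then show ?thesis by (intro bexI[of _ 1]) simp_all
  next
    case 2 then show ?thesis by (intro bexI[of _ 1]) simp_all
  next
    case 3 then show ?thesis using om2 by (intro bexI[of _ "omega * omega"]) simp_all
  next
    case 4 then show ?thesis using om2 by (intro bexI[of _ "omega * omega"]) simp_all
  next
    case 5 then show ?thesis using om2 omega_cnj_omega by (intro bexI[of _ omega]) simp_all
  next
    case 6 then show ?thesis using om2 omega_cnj_omega by (intro bexI[of _ omega]) simp_all
  qed
qed

subsection \<open>The Hermitian form\<close>

lemma herm_add_left: "herm (x + y) z = herm x z + herm y z"
  and herm_add_right: "herm z (x + y) = herm z x + herm z y"
  and herm_diff_left: "herm (x - y) z = herm x z - herm y z"
  and herm_diff_right: "herm z (x - y) = herm z x - herm z y"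
  and herm_minus_left: "herm (- x) z = - herm x z"
  and herm_minus_right: "herm z (- x) = - herm z x"
  and herm_scale_left: "herm (c *s x) z = c * herm x z"
  and herm_scale_right: "herm z (c *s x) = cnj c * herm z x"
  and herm_zero_left: "herm 0 z = 0"
  and herm_zero_right: "herm z 0 = 0"
  by (simp_all add: herm_expand algebra_simps)

lemmas herm_simps = herm_add_left herm_add_right herm_diff_left herm_diff_right
  herm_minus_left herm_minus_right herm_scale_left herm_scale_right herm_zero_left herm_zero_right

lemma herm_commute: "herm y x = cnj (herm x y)"
  by (simp add: herm_expand algebra_simps)

lemma herm_self_nonneg: "x$0 = 0 \<Longrightarrow> 0 \<le> Re (herm x x)"
  by (simp add: herm_expand)

lemma herm_self_eq_0:
  assumes "x$0 = 0" "Re (herm x x) = 0" shows "x = 0"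
proof -
  have "Re (herm x x) = (cmod (x$1))^2 + (cmod (x$2))^2 + (cmod (x$3))^2 + (cmod (x$4))^2"
    using assms(1) by (simp add: herm_expand cmod_def power2_eq_square)
  then have "cmod (x$1) = 0" "cmod (x$2) = 0" "cmod (x$3) = 0" "cmod (x$4) = 0"
    using assms(2) by (smt (verit) zero_le_power2 power_zero_numeral zero_eq_power2)+
  then show ?thesis using assms(1) by (simp add: cvec_eq_iff)
qed

text \<open>Signature \<open>(1,4)\<close>: eliminating the first coordinate with \<open>z$0 *s v - v$0 *s z\<close> reduces
  both statements below to the positive definite part.\<close>

lemma orth_negative_eq_0:
  assumes v: "Re (herm v v) < 0" and vz: "herm v z = 0" and z: "Re (herm z z) \<le> 0"
  shows "z = 0"
proof -
  define x where "x = (z$0) *s v - (v$0) *s z"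
  have x0: "x$0 = 0" unfolding x_def by simp
  have "herm z v = 0" using vz herm_commute[of z v] by simp
  then have "herm x x = (z$0 * cnj (z$0)) * herm v v + (v$0 * cnj (v$0)) * herm z z"
    unfolding x_def by (simp add: herm_simps vz algebra_simps)
  then have sum: "Re (herm x x) = (cmod (z$0))^2 * Re (herm v v) + (cmod (v$0))^2 * Re (herm z z)"
    by (simp add: complex_norm_square[symmetric])
  have t1: "(cmod (z$0))^2 * Re (herm v v) \<le> 0" using v by (simp add: mult_nonneg_nonpos)
  have t2: "(cmod (v$0))^2 * Re (herm z z) \<le> 0" using z by (simp add: mult_nonneg_nonpos)
  have "0 \<le> Re (herm x x)" using herm_self_nonneg[OF x0] .
  then have "(cmod (z$0))^2 * Re (herm v v) = 0" "Re (herm x x) = 0" using t1 t2 sum by linarith+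
  then have "z$0 = 0" "x = 0" using v herm_self_eq_0[OF x0] by simp_all
  then have "(v$0) *s z = 0" unfolding x_def by simp
  moreover have "v$0 \<noteq> 0" using herm_self_nonneg[of v] v by force
  ultimately show ?thesis by simp
qed

lemma null_orth_null_parallel:
  assumes "herm n n = 0" "herm m m = 0" "herm n m = 0" "n \<noteq> 0"
  shows "\<exists>\<mu>. m = \<mu> *s n"
proof -
  define x where "x = (m$0) *s n - (n$0) *s m"
  have x0: "x$0 = 0" unfolding x_def by simp
  have "herm m n = 0" using assms(3) herm_commute[of m n] by simp
  then have "herm x x = 0" unfolding x_def by (simp add: herm_simps assms)
  then have "x = 0" using herm_self_eq_0[OF x0] by simp
  then have e: "(m$0) *s n = (n$0) *s m" unfolding x_def by simp
  have "n$0 \<noteq> 0" using herm_self_eq_0[of n] assms(1,4) by auto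
  then have "m = (m$0 / n$0) *s n"
    using arg_cong[OF e, of "\<lambda>y. inverse (n$0) *s y"] by (simp add: vector_smult_assoc field_simps)
  then show ?thesis by blast
qed

subsection \<open>The lattice and complex hyperbolic space\<close>

lemma Lam_iff: "x \<in> Lam \<longleftrightarrow> (\<forall>i. x$i \<in> eis)"
  unfolding Lam_def by simp

lemma Lam_add [simp]: "x \<in> Lam \<Longrightarrow> y \<in> Lam \<Longrightarrow> x + y \<in> Lam"
  and Lam_diff [simp]: "x \<in> Lam \<Longrightarrow> y \<in> Lam \<Longrightarrow> x - y \<in> Lam"
  and Lam_minus [simp]: "x \<in> Lam \<Longrightarrow> - x \<in> Lam"
  and Lam_scale [simp]: "c \<in> eis \<Longrightarrow> x \<in> Lam \<Longrightarrow> c *s x \<in> Lam"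
  and Lam_axis [simp]: "axis i 1 \<in> Lam"
  by (simp_all add: Lam_iff axis_def)

lemma herm_Lam: "x \<in> Lam \<Longrightarrow> y \<in> Lam \<Longrightarrow> herm x y \<in> eis"
  by (simp add: Lam_iff herm_expand)

lemma Lam_fix_iff: "x \<in> Lam_fix xi \<longleftrightarrow> x \<in> Lam \<and> xi x = x"
  unfolding Lam_fix_def by simp

lemma CH4_has_negative:
  assumes "L \<in> CH4" shows "\<exists>v\<in>L. Re (herm v v) < 0"
proof -
  obtain v where "L = cline v" "Re (herm v v) < 0" using assms unfolding CH4_def by blast
  moreover have "v \<in> cline v" unfolding cline_def by (metis (mono_tags) CollectI vector_smult_lid)
  ultimately show ?thesis by blast
qed

lemma perp_iff: "L \<in> perp R \<longleftrightarrow> L \<in> CH4 \<and> (\<forall>z\<in>L. \<forall>r\<in>R. herm z r = 0)"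
  unfolding perp_def by auto

lemma Hxi_iff: "L \<in> Hxi xi \<longleftrightarrow> L \<in> CH4 \<and> xiC xi ` L = L"
  unfolding Hxi_def by auto

lemma perp_scale: "c \<noteq> 0 \<Longrightarrow> perp {c *s r} = perp {r}"
  by (rule set_eqI) (simp add: perp_iff herm_scale_right)

lemma Hxi_inter_perp_eqI:
  assumes "\<And>L. L \<in> Hxi xi \<Longrightarrow> (\<forall>z\<in>L. \<forall>x\<in>R. herm z x = 0) \<longleftrightarrow> (\<forall>z\<in>L. \<forall>x\<in>S. herm z x = 0)"
  shows "Hxi xi \<inter> perp R = Hxi xi \<inter> perp S"
  using assms by (auto simp: perp_iff Hxi_iff)

lemma Hxi_perp_negative:
  assumes "L \<in> Hxi xi" "L \<in> perp R"
  obtains v where "v \<in> L" "Re (herm v v) < 0" "\<forall>x\<in>R. herm v x = 0"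
proof -
  have "L \<in> CH4" using assms(1) unfolding Hxi_iff by blast
  with assms(2) show thesis using that CH4_has_negative unfolding perp_iff by blast
qed

subsection \<open>Two-dimensional sublattices\<close>

definition zspan :: "cvec \<Rightarrow> cvec \<Rightarrow> cvec set" where
  "zspan u w = {of_int a *s u + of_int b *s w | a b. True}"

text \<open>The coefficients are the \<open>2 \<times> 2\<close> minors of the coordinate matrix.\<close>

lemma zspan_dependent:
  assumes "x1 \<in> zspan u w" "x2 \<in> zspan u w" "x3 \<in> zspan u w"
  shows "\<exists>\<alpha> \<beta> \<gamma> :: int. (\<alpha>, \<beta>, \<gamma>) \<noteq> (0, 0, 0) \<and> of_int \<alpha> *s x1 + of_int \<beta> *s x2 + of_int \<gamma> *s x3 = 0"
proof -
  obtain p1 q1 p2 q2 p3 q3 where x1: "x1 = of_int p1 *s u + of_int q1 *s w"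
    and x2: "x2 = of_int p2 *s u + of_int q2 *s w" and x3: "x3 = of_int p3 *s u + of_int q3 *s w"
    using assms unfolding zspan_def by blast
  have minors: "of_int (p2*q3 - p3*q2) *s x1 + of_int (p3*q1 - p1*q3) *s x2 + of_int (p1*q2 - p2*q1) *s x3 = 0"
    unfolding x1 x2 x3 vec_eq_iff by (simp add: algebra_simps)
  show ?thesis
  proof (cases "(p2*q3 - p3*q2, p3*q1 - p1*q3, p1*q2 - p2*q1) = (0, 0, 0)")
    case False
    then show ?thesis using minors by blast
  next
    case True
    then have d: "p1*q2 = p2*q1" by simp
    consider "p1 = 0" "q1 = 0" | "p1 \<noteq> 0" | "q1 \<noteq> 0" by blast
    then show ?thesis
    proof cases
      case 1
      then show ?thesis unfolding x1 by (intro exI[of _ 1] exI[of _ 0]) simp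
    next
      case 2
      have "of_int (-p2) *s x1 + of_int p1 *s x2 + of_int 0 *s x3 = 0"
        unfolding x1 x2 vec_eq_iff using d by (simp add: algebra_simps flip: of_int_mult)
      then show ?thesis using 2 by blast
    next
      case 3
      have "of_int (-q2) *s x1 + of_int q1 *s x2 + of_int 0 *s x3 = 0"
        unfolding x1 x2 vec_eq_iff using d by (simp add: algebra_simps flip: of_int_mult)
      then show ?thesis using 3 by blast
    qed
  qed
qed

lemma herm_lincomb_left:
  "herm (of_int \<alpha> *s x1 + of_int \<beta> *s x2 + of_int \<gamma> *s x3) z
    = of_int \<alpha> * herm x1 z + of_int \<beta> * herm x2 z + of_int \<gamma> * herm x3 z"
  by (simp add: herm_simps)

text \<open>A nonsingular Gram matrix makes \<open>a, b\<close> a rational basis of \<open>zspan u w\<close>.\<close>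

lemma herm_orth_zspan:
  assumes "a \<in> zspan u w" "b \<in> zspan u w" "x \<in> zspan u w"
    and gram: "herm a a * herm b b \<noteq> herm a b * herm b a"
    and "herm z a = 0" "herm z b = 0"
  shows "herm z x = 0"
proof -
  obtain \<alpha> \<beta> \<gamma> :: int where nz: "(\<alpha>, \<beta>, \<gamma>) \<noteq> (0, 0, 0)"
    and dep: "of_int \<alpha> *s x + of_int \<beta> *s a + of_int \<gamma> *s b = 0"
    using zspan_dependent[OF assms(3,1,2)] by blast
  show ?thesis
  proof (cases "\<alpha> = 0")
    case False
    have "herm z (of_int \<alpha> *s x + of_int \<beta> *s a + of_int \<gamma> *s b) = 0"
      using dep by (simp add: herm_zero_right)
    then show ?thesis using False assms(5,6) by (simp add: herm_simps)
  next
    case True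
    have "herm (of_int \<alpha> *s x + of_int \<beta> *s a + of_int \<gamma> *s b) a = 0"
      "herm (of_int \<alpha> *s x + of_int \<beta> *s a + of_int \<gamma> *s b) b = 0"
      using dep by (simp_all add: herm_zero_left)
    then have "of_int \<beta> * herm a a + of_int \<gamma> * herm b a = 0"
      "of_int \<beta> * herm a b + of_int \<gamma> * herm b b = 0"
      using True unfolding herm_lincomb_left by simp_all
    then have "of_int \<beta> * (herm a a * herm b b - herm a b * herm b a) = 0"
      "of_int \<gamma> * (herm a a * herm b b - herm a b * herm b a) = 0"
      by algebra+
    then show ?thesis using gram nz True by simp
  qed
qed

lemma zspan_norm_2_orth_eq_pm:
  assumes "a' \<in> zspan u w" "a \<in> zspan u w" "b \<in> zspan u w"
    and "herm a' a' = 2" "herm a a = 2" "herm b b = 6" and "herm a' b = 0" "herm a b = 0"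
  shows "a = a' \<or> a = - a'"
proof -
  obtain \<alpha> \<beta> \<gamma> :: int where nz: "(\<alpha>, \<beta>, \<gamma>) \<noteq> (0, 0, 0)"
    and dep: "of_int \<alpha> *s a' + of_int \<beta> *s a + of_int \<gamma> *s b = 0"
    using zspan_dependent[OF assms(1-3)] by blast
  have "herm (of_int \<alpha> *s a' + of_int \<beta> *s a + of_int \<gamma> *s b) b = 0"
    using dep by (simp add: herm_zero_left)
  then have "\<gamma> = 0" unfolding herm_lincomb_left using assms(6-8) by simp
  then have eq: "of_int \<beta> *s a = - (of_int \<alpha> *s a')"
    using dep by (simp add: eq_neg_iff_add_eq_0 add.commute)
  have "a' \<noteq> 0" using assms(4) by (auto simp: herm_zero_left)
  then have "\<beta> \<noteq> 0" using nz eq \<open>\<gamma> = 0\<close> by auto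
  have "herm (of_int \<beta> *s a) (of_int \<beta> *s a) = herm (of_int \<alpha> *s a') (of_int \<alpha> *s a')"
    using eq by (simp add: herm_minus_left herm_minus_right)
  then have "of_int (\<beta> * \<beta>) = (of_int (\<alpha> * \<alpha>) :: complex)"
    using assms(4,5) by (simp add: herm_scale_left herm_scale_right)
  then have "\<beta> = \<alpha> \<or> \<beta> = - \<alpha>" using square_eq_iff by (metis of_int_eq_iff)
  then have "of_int \<beta> *s a = of_int \<beta> *s (- a') \<or> of_int \<beta> *s a = of_int \<beta> *s a'"
    using eq by (metis of_int_minus vector_smult_lneg vector_smult_rneg minus_minus)
  then show ?thesis using \<open>\<beta> \<noteq> 0\<close> by (metis vector_mul_lcancel of_int_eq_0_iff)
qed

text \<open>If all six norm-2 roots were orthogonal to a norm-6 root \<open>b\<close>, they would lie on the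
  line orthogonal to \<open>b\<close> in the rank-2 lattice, which holds only the two roots \<open>\<pm>a\<close>.\<close>

lemma G2_nonorthogonal_roots:
  assumes "G2_root_system xi R"
  obtains a b where "a \<in> R" "b \<in> R" "herm a a = 2" "herm b b = 6" "herm a b \<noteq> 0"
proof -
  obtain u w where zs: "R \<subseteq> zspan u w"
    using assms unfolding G2_root_system_def zspan_def by blast
  define R2 where "R2 = {x\<in>R. herm x x = 2}"
  have c2: "card R2 = 6" and c6: "card {x\<in>R. herm x x = 6} = 6"
    using assms unfolding G2_root_system_def R2_def by blast+
  have "R2 \<noteq> {}" "{x\<in>R. herm x x = 6} \<noteq> {}" using c2 c6 by (metis card.empty zero_neq_numeral)+
  then obtain a' b where a': "a' \<in> R2" and b: "b \<in> R" "herm b b = 6" by blast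
  have "\<exists>a\<in>R2. herm a b \<noteq> 0"
  proof (rule ccontr)
    assume "\<not> ?thesis"
    then have "R2 \<subseteq> {a', - a'}"
      using zspan_norm_2_orth_eq_pm[of a' u w _ b] a' b zs unfolding R2_def by blast
    then have "card R2 \<le> card {a', - a'}" by (intro card_mono) auto
    also have "\<dots> \<le> 2" by (simp add: card_insert_le_m1)
    finally show False using c2 by simp
  qed
  then show thesis using that b unfolding R2_def by blast
qed

text \<open>The vector \<open>6a - 3p b\<close> has norm \<open>72 - 54p\<^sup>2\<close> and is orthogonal to a negative vector.\<close>

lemma negative_orth_root_pair_bound:
  assumes v: "Re (herm v v) < 0" "herm v a = 0" "herm v b = 0"
    and n: "herm a a = 2" "herm b b = 6" "herm a b = of_int (3*p)" "herm b a = of_int (3*p)"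
  shows "p * p \<le> 1"
proof (rule ccontr)
  assume "\<not> p * p \<le> 1"
  then have p2: "2 \<le> p * p" by simp
  define z where "z = 6 *s a - of_int (3*p) *s b"
  have "herm v z = 0" unfolding z_def by (simp add: herm_simps v)
  moreover have hzz: "herm z z = of_int (72 - 54 * (p * p))"
    unfolding z_def by (simp add: herm_simps n algebra_simps)
  moreover have "72 - 54 * (p * p) \<le> 0" using p2 by linarith
  then have "Re (herm z z) \<le> 0" unfolding hzz complex_Re_of_int by (simp only: of_int_le_0_iff)
  ultimately have "z = 0" using orth_negative_eq_0[OF v(1)] by blast
  then have "(of_int (72 - 54 * (p * p)) :: complex) = 0" using hzz by (simp add: herm_zero_left)
  then have "72 - 54 * (p * p) = 0" by (simp only: of_int_eq_0_iff)
  with p2 show False by linarith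
qed

text \<open>Evaluating \<open>A + kB + k\<^sup>2C\<close> at \<open>\<pm>K\<close> and adding gives \<open>2A + 2K\<^sup>2C\<close>, which is large for large \<open>K\<close>.\<close>

lemma int_quadratic_exceeds_1:
  fixes A B C :: complex
  assumes "1 \<le> cmod C"
  shows "\<exists>k::int. 1 < cmod (A + of_int k * B + of_int k * of_int k * C)"
proof (rule ccontr)
  assume "\<not> ?thesis"
  then have small: "cmod (A + of_int k * B + of_int k * of_int k * C) \<le> 1" for k :: int
    by (simp add: not_less)
  define K :: int where "K = ceiling (cmod A) + 2"
  have K: "cmod A + 2 \<le> of_int K" unfolding K_def by linarith
  then have KK: "of_int K \<le> (of_int K :: real) * of_int K"
    using norm_ge_zero[of A] by (simp add: mult_le_cancel_left1)
  have "2 * (of_int K * of_int K) \<le> 2 * (of_int K * of_int K) * cmod C"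
    using assms by (simp add: mult_le_cancel_left1)
  also have "\<dots> = cmod (2 * (of_int K * of_int K) * C)" by (simp add: norm_mult)
  also have "\<dots> \<le> cmod (2 * A + 2 * (of_int K * of_int K) * C) + cmod (2 * A)"
    using norm_triangle_ineq4[of "2 * A + 2 * (of_int K * of_int K) * C" "2 * A"] by simp
  also have "2 * A + 2 * (of_int K * of_int K) * C
      = (A + of_int K * B + of_int K * of_int K * C) + (A + of_int (-K) * B + of_int (-K) * of_int (-K) * C)"
    by (simp add: algebra_simps)
  also have "cmod \<dots> \<le> 2" by (rule norm_triangle_le) (use small[of K] small[of "-K"] in linarith)
  finally show False using K KK by (simp add: norm_mult)
qed

locale anti_inv =
  fixes xi :: "cvec \<Rightarrow> cvec"
  assumes anti_involution: "anti_involution xi"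
begin

lemma xi_Lam [simp]: "x \<in> Lam \<Longrightarrow> xi x \<in> Lam"
  and xi_add: "x \<in> Lam \<Longrightarrow> y \<in> Lam \<Longrightarrow> xi (x + y) = xi x + xi y"
  and xi_scale: "a \<in> eis \<Longrightarrow> x \<in> Lam \<Longrightarrow> xi (a *s x) = cnj a *s xi x"
  and xi_involutive [simp]: "x \<in> Lam \<Longrightarrow> xi (xi x) = x"
  and xi_herm: "x \<in> Lam \<Longrightarrow> y \<in> Lam \<Longrightarrow> herm (xi x) (xi y) = cnj (herm x y)"
  using anti_involution unfolding anti_involution_def by (auto dest: bij_betw_apply)

lemma xi_minus: "x \<in> Lam \<Longrightarrow> xi (- x) = - xi x"
  using xi_scale[of "-1" x] by (simp add: vector_sneg_minus1[symmetric])

lemma xi_diff: "x \<in> Lam \<Longrightarrow> y \<in> Lam \<Longrightarrow> xi (x - y) = xi x - xi y"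
  using xi_add[of x "-y"] xi_minus[of y] by simp

lemma xiC_Lam:
  assumes "x \<in> Lam" shows "xiC xi x = xi x"
proof -
  have c: "x$i \<in> eis" for i using assms by (simp add: Lam_iff)
  have "xi x = xi (x$0 *s axis 0 1 + x$1 *s axis 1 1 + x$2 *s axis 2 1 + x$3 *s axis 3 1 + x$4 *s axis 4 1)"
    by (subst cvec_axis_decomp) (rule refl)
  also have "\<dots> = cnj (x$0) *s xi (axis 0 1) + cnj (x$1) *s xi (axis 1 1) + cnj (x$2) *s xi (axis 2 1)
      + cnj (x$3) *s xi (axis 3 1) + cnj (x$4) *s xi (axis 4 1)"
    by (simp add: xi_add xi_scale c)
  finally show ?thesis unfolding xiC_def sum_UNIV_5 by simp
qed

lemma herm_xiC_xi_axis: "herm (xiC xi x) (xi (axis j 1)) = cnj (x$j) * (if j = 0 then -1 else 1)"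
proof -
  have "j \<in> {0, 1, 2, 3, 4}" using UNIV_5 by blast
  then show ?thesis
    unfolding xiC_def sum_UNIV_5 by (auto simp: herm_add_left herm_scale_left xi_herm herm_axis)
qed

lemma xiC_herm: "herm (xiC xi x) (xiC xi y) = cnj (herm x y)"
proof -
  have "herm (xiC xi x) (xiC xi y) = y$0 * herm (xiC xi x) (xi (axis 0 1)) + y$1 * herm (xiC xi x) (xi (axis 1 1))
      + y$2 * herm (xiC xi x) (xi (axis 2 1)) + y$3 * herm (xiC xi x) (xi (axis 3 1)) + y$4 * herm (xiC xi x) (xi (axis 4 1))"
    unfolding xiC_def[of xi y] sum_UNIV_5 by (simp only: herm_add_right herm_scale_right complex_cnj_cnj)
  also have "\<dots> = - (y$0 * cnj (x$0)) + y$1 * cnj (x$1) + y$2 * cnj (x$2) + y$3 * cnj (x$3) + y$4 * cnj (x$4)"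
    by (simp add: herm_xiC_xi_axis)
  also have "\<dots> = cnj (herm x y)" unfolding herm_expand by (simp add: algebra_simps)
  finally show ?thesis .
qed

lemma Hxi_orth_xi:
  assumes L: "L \<in> Hxi xi" and r: "r \<in> Lam" and o: "\<forall>z\<in>L. herm z r = 0"
  shows "\<forall>z\<in>L. herm z (xi r) = 0"
proof
  fix z assume "z \<in> L"
  then have "herm (xiC xi z) r = 0" using o L unfolding Hxi_iff by blast
  then have "cnj (herm z (xi r)) = 0" using xiC_herm[of z "xi r"] r by (simp add: xiC_Lam)
  then show "herm z (xi r) = 0" by simp
qed

subsection \<open>Mirrors meeting \<open>H\<^sup>4\<^sub>\<xi>\<close>\<close>

text \<open>A point of \<open>H\<^sup>4\<^sub>\<xi> \<inter> r\<^sup>\<bottom>\<close> is orthogonal to \<open>r - c \<xi>r\<close>, \<open>c = h(r, \<xi>r)\<close>, whose norm is \<open>1 - |c|\<^sup>2\<close>.\<close>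

lemma mirror_meets_Hxi_small_or_parallel:
  assumes r: "r \<in> Lam" "herm r r = 1" and L: "L \<in> Hxi xi" "L \<in> perp {r}"
  shows "cmod (herm r (xi r)) < 1 \<or> r = herm r (xi r) *s xi r"
proof -
  obtain v where v: "v \<in> L" "Re (herm v v) < 0" "herm v r = 0"
    using Hxi_perp_negative[OF L] by auto
  have "herm v (xi r) = 0"
    using Hxi_orth_xi[OF L(1) r(1)] L(2) v(1) unfolding perp_iff by blast
  define c where "c = herm r (xi r)"
  define w where "w = r - c *s xi r"
  have "herm v w = 0" unfolding w_def by (simp add: herm_simps v(3) \<open>herm v (xi r) = 0\<close>)
  moreover have "herm w w = 1 - c * cnj c"
    unfolding w_def using xi_herm[OF r(1) r(1)] herm_commute[of r "xi r"]
    by (simp add: herm_simps r(2) c_def algebra_simps)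
  then have "Re (herm w w) = 1 - (cmod c)^2" by (simp add: complex_norm_square[symmetric])
  moreover have "\<not> cmod c < 1 \<Longrightarrow> (cmod c)^2 \<ge> 1" by (simp add: one_le_power)
  ultimately have "cmod c < 1 \<or> w = 0" using orth_negative_eq_0[OF v(2)] by fastforce
  then show ?thesis unfolding w_def c_def by auto
qed

lemma mirror_meets_Hxi_cases:
  assumes r: "r \<in> Lam" "herm r r = 1" and L: "L \<in> Hxi xi" "L \<in> perp {r}"
  shows "herm r (xi r) = 0 \<or> (\<exists>\<mu>. xi r = \<mu> *s r)"
proof -
  define c where "c = herm r (xi r)"
  have "c \<in> eis" unfolding c_def using r by (simp add: herm_Lam)
  then have "cmod c < 1 \<Longrightarrow> c = 0" using eis_cmod_ge_1 by fastforce
  moreover have "xi r = inverse c *s r" if "r = c *s xi r"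
  proof -
    have "c \<noteq> 0" using that r(2) by (auto simp: herm_zero_left)
    then show ?thesis by (subst that) (simp add: vector_smult_assoc)
  qed
  ultimately show ?thesis
    using mirror_meets_Hxi_small_or_parallel[OF assms] unfolding c_def by blast
qed

lemma mirror_disjoint_Hxi:
  assumes r: "r \<in> Lam" "herm r r = 1" and big: "1 < cmod (herm r (xi r))"
  shows "Hxi xi \<inter> perp {r} = {}"
proof (rule ccontr)
  assume "Hxi xi \<inter> perp {r} \<noteq> {}"
  then have "r = herm r (xi r) *s xi r"
    using mirror_meets_Hxi_small_or_parallel[OF r] big by auto
  then have "herm r r = (herm r (xi r) * cnj (herm r (xi r))) * herm (xi r) (xi r)"
    by (metis herm_scale_left herm_scale_right mult.assoc)
  then have "herm r (xi r) * cnj (herm r (xi r)) = 1" using xi_herm[OF r(1) r(1)] r(2) by simp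
  then have "complex_of_real ((cmod (herm r (xi r)))^2) = 1" by (simp only: complex_norm_square)
  then have "1 = (cmod (herm r (xi r)))^2" by (simp only: of_real_eq_1_iff)
  with big show False using one_less_power[of "cmod (herm r (xi r))" 2] by simp
qed

subsection \<open>The case \<open>\<xi>r = \<mu>r\<close>\<close>

text \<open>The eigenvalue \<open>\<mu>\<close> is a unit \<open>\<pm>e\<^sup>2\<close>, and then \<open>e r\<close> resp. \<open>\<theta>e r\<close> is \<open>\<xi>\<close>-fixed.\<close>

lemma fixed_root_of_eigenvector:
  assumes r: "r \<in> Lam" "herm r r = 1" and eigen: "xi r = \<mu> *s r"
  shows "\<exists>r'. lat_root xi r' \<and> (herm r' r' = 1 \<or> herm r' r' = 3) \<and> perp {r'} = perp {r}"
proof -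
  have "herm (xi r) r = \<mu>" using eigen r by (simp add: herm_scale_left)
  then have "\<mu> \<in> eis" using r by (metis herm_Lam xi_Lam)
  moreover have "\<mu> * cnj \<mu> = 1"
    using xi_herm[OF r(1) r(1)] r(2) eigen by (simp add: herm_scale_left herm_scale_right mult.commute)
  ultimately obtain e where e: "e \<in> eis" "e * cnj e = 1" "\<mu> = e * e \<or> \<mu> = - (e * e)"
    using eis_unit_square by blast
  have e0: "e \<noteq> 0" using e(2) by auto
  show ?thesis
  proof (cases "\<mu> = e * e")
    case True
    have "xi (e *s r) = e *s r"
      using xi_scale[OF e(1) r(1)] e(2) unfolding eigen True
      by (simp add: vector_smult_assoc mult.commute mult.left_commute)
    moreover have "herm (e *s r) (e *s r) = 1" using e(2) r(2) by (simp add: herm_simps mult.commute)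
    ultimately show ?thesis
      using e(1) r(1) perp_scale[OF e0] unfolding lat_root_def Lam_fix_iff
      by (intro exI[of _ "e *s r"]) simp
  next
    case False
    then have \<mu>: "\<mu> = - (e * e)" using e(3) by blast
    have te: "theta * e \<in> eis" using e(1) by simp
    have "xi ((theta * e) *s r) = (theta * e) *s r"
      using xi_scale[OF te r(1)] e(2) unfolding eigen \<mu>
      by (simp add: vector_smult_assoc cnj_theta algebra_simps)
    moreover have "herm ((theta * e) *s r) ((theta * e) *s r) = 3"
      using e(2) r(2) theta_cnj_theta by (simp add: herm_simps algebra_simps)
    moreover have "(theta * e) *s r = theta *s (e *s r)" by (simp add: vector_smult_assoc)
    ultimately show ?thesis
      using te e(1) r(1) e0 theta_neq_0 perp_scale unfolding lat_root_def Lam_fix_iff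
      by (metis Lam_scale mult_eq_0_iff)
  qed
qed

end

subsection \<open>The case \<open>h(r, \<xi>r) = 0\<close>\<close>

definition eis_units :: "complex set" where
  "eis_units = {1, -1, omega, - omega, omega * omega, - (omega * omega)}"

lemma card_eis_units: "card eis_units = 6"
  unfolding eis_units_def by (simp add: omega_eq complex_eq_iff)

lemma eis_units_unit: "e \<in> eis_units \<Longrightarrow> e \<in> eis \<and> e * cnj e = 1"
  unfolding eis_units_def using omega_cnj_omega by (auto simp: algebra_simps)

text \<open>If \<open>h(r, \<xi>r) = 0\<close>, the \<open>\<xi>\<close>-fixed vectors of the lattice spanned by \<open>r\<close> and \<open>\<xi>r\<close> are the
  \<open>a r + cnj a \<xi>r\<close>, of norm \<open>2|a|\<^sup>2\<close>; the units \<open>a\<close> and the \<open>\<theta>\<close>-multiples of units give its roots.\<close>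

definition sym_comb :: "(cvec \<Rightarrow> cvec) \<Rightarrow> cvec \<Rightarrow> complex \<Rightarrow> cvec" where
  "sym_comb xi r a = a *s r + cnj a *s xi r"

definition G2_of_mirror :: "(cvec \<Rightarrow> cvec) \<Rightarrow> cvec \<Rightarrow> cvec set" where
  "G2_of_mirror xi r = sym_comb xi r ` (eis_units \<union> (\<lambda>d. theta * d) ` eis_units)"

lemma herm_sym_comb_right: "herm z (sym_comb xi r a) = cnj a * herm z r + a * herm z (xi r)"
  unfolding sym_comb_def by (simp add: herm_simps)

context anti_inv
begin

context
  fixes r assumes r: "r \<in> Lam" "herm r r = 1" and r_orth: "herm r (xi r) = 0"
begin

lemma sym_comb_Lam: "a \<in> eis \<Longrightarrow> sym_comb xi r a \<in> Lam"
  unfolding sym_comb_def using r(1) by simp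

lemma sym_comb_fixed: "a \<in> eis \<Longrightarrow> xi (sym_comb xi r a) = sym_comb xi r a"
  unfolding sym_comb_def using r(1) by (simp add: xi_add xi_scale add.commute)

lemma herm_sym_comb_self: "herm (sym_comb xi r a) (sym_comb xi r a) = 2 * (a * cnj a)"
  unfolding sym_comb_def using xi_herm[OF r(1) r(1)] r(2) r_orth herm_commute[of r "xi r"]
  by (simp add: herm_simps algebra_simps)

lemma herm_sym_comb_mirror: "herm (sym_comb xi r a) r = a"
  unfolding sym_comb_def using r(2) r_orth herm_commute[of r "xi r"] by (simp add: herm_simps)

lemma sym_comb_span:
  assumes "a \<in> eis" shows "sym_comb xi r a \<in> zspan (sym_comb xi r 1) (sym_comb xi r omega)"
proof -
  obtain p q where "a = of_int p + of_int q * omega" using assms unfolding eis_iff by blast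
  then have "sym_comb xi r a = of_int p *s sym_comb xi r 1 + of_int q *s sym_comb xi r omega"
    unfolding sym_comb_def vec_eq_iff by (simp add: algebra_simps)
  then show ?thesis unfolding zspan_def by blast
qed

lemma G2_of_mirror_root_system: "G2_root_system xi (G2_of_mirror xi r)"
proof -
  let ?f = "sym_comb xi r" and ?T = "(\<lambda>d. theta * d) ` eis_units"
  have inj: "inj_on ?f A" for A by (rule inj_onI) (metis herm_sym_comb_mirror)
  have U: "a \<in> eis" "herm (?f a) (?f a) = 2" if "a \<in> eis_units" for a
    using eis_units_unit[OF that] by (simp_all add: herm_sym_comb_self)
  have T: "theta * d \<in> eis" "herm (?f (theta * d)) (?f (theta * d)) = 6"
    "\<exists>y\<in>Lam. ?f (theta * d) = theta *s y" if d: "d \<in> eis_units" for d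
  proof -
    show "theta * d \<in> eis" using eis_units_unit[OF d] by simp
    show "herm (?f (theta * d)) (?f (theta * d)) = 6"
      using eis_units_unit[OF d] theta_cnj_theta unfolding herm_sym_comb_self
      by (simp add: algebra_simps)
    have "?f (theta * d) = theta *s (d *s r - cnj d *s xi r)"
      unfolding sym_comb_def vec_eq_iff by (simp add: cnj_theta algebra_simps)
    moreover have "d *s r - cnj d *s xi r \<in> Lam" using eis_units_unit[OF d] r(1) by simp
    ultimately show "\<exists>y\<in>Lam. ?f (theta * d) = theta *s y" by blast
  qed
  have "{x \<in> G2_of_mirror xi r. herm x x = 2} = ?f ` eis_units"
    "{x \<in> G2_of_mirror xi r. herm x x = 6} = ?f ` ?T"
    unfolding G2_of_mirror_def using U T by auto
  moreover have "card (?f ` eis_units) = 6" "card (?f ` ?T) = 6"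
    using card_eis_units card_image[OF inj] card_image[of "(\<lambda>d. theta * d)" eis_units] theta_neq_0
    by (simp_all add: inj_on_def)
  ultimately have cards: "card {x \<in> G2_of_mirror xi r. herm x x = 2} = 6"
    "card {x \<in> G2_of_mirror xi r. herm x x = 6} = 6" by simp_all
  have roots: "\<forall>x\<in>G2_of_mirror xi r. lat_root xi x \<and> (herm x x = 2 \<or> herm x x = 6)"
    using U T sym_comb_Lam sym_comb_fixed
    unfolding G2_of_mirror_def lat_root_def Lam_fix_iff by auto
  have "G2_of_mirror xi r \<subseteq> zspan (?f 1) (?f omega)"
    unfolding G2_of_mirror_def using U T sym_comb_span by blast
  moreover have "?f 1 \<in> Lam_fix xi" "?f omega \<in> Lam_fix xi"
    using sym_comb_Lam sym_comb_fixed by (simp_all add: Lam_fix_iff)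
  ultimately have "\<exists>u\<in>Lam_fix xi. \<exists>w\<in>Lam_fix xi.
      G2_of_mirror xi r \<subseteq> {of_int a *s u + of_int b *s w | a b. True}"
    unfolding zspan_def by blast
  with roots cards show ?thesis unfolding G2_root_system_def by blast
qed

lemma Hxi_perp_G2_of_mirror: "Hxi xi \<inter> perp (G2_of_mirror xi r) = Hxi xi \<inter> perp {r}"
proof (rule Hxi_inter_perp_eqI)
  fix L assume L: "L \<in> Hxi xi"
  have "sym_comb xi r 1 \<in> G2_of_mirror xi r" "sym_comb xi r theta \<in> G2_of_mirror xi r"
    unfolding G2_of_mirror_def eis_units_def by auto
  then have "herm z r = 0" if "\<forall>x\<in>G2_of_mirror xi r. herm z x = 0" for z
  proof -
    have "herm z r + herm z (xi r) = 0" "theta * (herm z (xi r) - herm z r) = 0"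
      using that \<open>sym_comb xi r 1 \<in> _\<close> \<open>sym_comb xi r theta \<in> _\<close>
      by (auto simp: herm_sym_comb_right cnj_theta algebra_simps)
    then show ?thesis using theta_neq_0 by simp
  qed
  moreover have "herm z x = 0" if "\<forall>z\<in>L. herm z r = 0" "z \<in> L" "x \<in> G2_of_mirror xi r" for z x
    using that Hxi_orth_xi[OF L r(1)] unfolding G2_of_mirror_def by (auto simp: herm_sym_comb_right)
  ultimately show "(\<forall>z\<in>L. \<forall>x\<in>G2_of_mirror xi r. herm z x = 0) \<longleftrightarrow> (\<forall>z\<in>L. \<forall>x\<in>{r}. herm z x = 0)"
    by blast
qed

end

lemma mirror_meets_Hxi:
  assumes "discriminant_mirror M" "M \<inter> Hxi xi \<noteq> {}"
  shows "(\<exists>r. lat_root xi r \<and> (herm r r = 1 \<or> herm r r = 3) \<and> M \<inter> Hxi xi = Hxi xi \<inter> perp {r})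
    \<or> (\<exists>R. G2_root_system xi R \<and> M \<inter> Hxi xi = Hxi xi \<inter> perp R)"
proof -
  obtain r L where r: "r \<in> Lam" "herm r r = 1" "M = perp {r}" and L: "L \<in> Hxi xi" "L \<in> perp {r}"
    using assms unfolding discriminant_mirror_def by blast
  from mirror_meets_Hxi_cases[OF r(1,2) L] show ?thesis
  proof
    assume "herm r (xi r) = 0"
    then show ?thesis
      using G2_of_mirror_root_system Hxi_perp_G2_of_mirror r by blast
  next
    assume "\<exists>\<mu>. xi r = \<mu> *s r"
    then show ?thesis using fixed_root_of_eigenvector[OF r(1,2)] r(3) by blast
  qed
qed

subsection \<open>\<open>G\<^sub>2\<close> root systems cut out mirrors\<close>

lemma herm_fixed_real: "x \<in> Lam_fix xi \<Longrightarrow> y \<in> Lam_fix xi \<Longrightarrow> cnj (herm x y) = herm x y"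
  using xi_herm[of x y] by (simp add: Lam_fix_iff)

lemma herm_fixed_theta_multiple:
  assumes a: "a \<in> Lam_fix xi" and y: "y \<in> Lam" "theta *s y \<in> Lam_fix xi"
  obtains p :: int where "herm a y = of_int p * theta"
proof -
  have "herm a y \<in> eis" using a y(1) by (simp add: herm_Lam Lam_fix_iff)
  then obtain p q where pq: "herm a y = of_int p + of_int q * omega" unfolding eis_iff by blast
  have "Im (herm a (theta *s y)) = 0"
    using herm_fixed_real[OF a y(2)] by (metis Reals_cnj_iff complex_is_Real_iff)
  then have "sqrt 3 * (of_int q / 2 - of_int p) = 0"
    unfolding herm_scale_right pq by (simp add: theta_eq omega_eq field_simps)
  then have "q = 2 * p" by simp
  then have "herm a y = of_int p * theta" unfolding pq by (simp add: theta_omega algebra_simps)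
  then show thesis by (rule that)
qed

lemma xi_neg_of_theta_fixed:
  assumes y: "y \<in> Lam" "xi (theta *s y) = theta *s y" shows "xi y = - y"
proof -
  have "theta *s xi y = theta *s (- y)"
    using xi_scale[OF eis_theta y(1)] y(2) by (simp add: cnj_theta vector_smult_lneg vector_smult_rneg)
  then show ?thesis using theta_neq_0 vector_mul_lcancel by metis
qed

text \<open>With \<open>k = p\<omega>\<^sup>2\<close> one has \<open>cnj k - k = p\<theta>\<close> and \<open>cnj k + k = -p\<close>: the first makes \<open>a + k y\<close>
  a norm-1 vector, the second recovers \<open>y\<^sup>\<bottom>\<close> from the mirror and its \<open>\<xi>\<close>-image.\<close>

lemma root_pair_mirror:
  assumes a: "a \<in> Lam_fix xi" "herm a a = 2" and y: "y \<in> Lam" "xi y = - y" "herm y y = 2"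
    and p: "herm a y = of_int p * theta" "p * p = 1"
  obtains r where "r \<in> Lam" "herm r r = 1"
    "\<And>L. L \<in> Hxi xi \<Longrightarrow> (\<forall>z\<in>L. herm z r = 0) \<longleftrightarrow> (\<forall>z\<in>L. herm z a = 0 \<and> herm z y = 0)"
proof
  define k where "k = of_int p * (omega * omega)"
  have k: "k \<in> eis" unfolding k_def by simp
  have aL: "a \<in> Lam" "xi a = a" using a(1) by (simp_all add: Lam_fix_iff)
  show "a + k *s y \<in> Lam" using aL k y by simp
  have "p = 1 \<or> p = -1" using p(2) by (simp add: zmult_eq_1_iff)
  moreover have "herm y a = - of_int p * theta" using p(1) herm_commute[of y a] by (simp add: cnj_theta)
  ultimately show "herm (a + k *s y) (a + k *s y) = 1"
    using a(2) y(3) p(1) unfolding k_def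
    by (elim disjE) (simp_all add: herm_simps omega_eq theta_eq complex_eq_iff field_simps)
  fix L assume L: "L \<in> Hxi xi"
  have xir: "xi (a + k *s y) = a - cnj k *s y" using aL k y by (simp add: xi_add xi_scale)
  have "cnj k + k = of_int p * (cnj omega * cnj omega + omega * omega)"
    unfolding k_def by (simp add: algebra_simps)
  also have "cnj omega * cnj omega + omega * omega = -1"
    by (simp add: omega_eq complex_eq_iff field_simps)
  finally have ksum: "cnj k + k = - of_int p" by simp
  show "(\<forall>z\<in>L. herm z (a + k *s y) = 0) \<longleftrightarrow> (\<forall>z\<in>L. herm z a = 0 \<and> herm z y = 0)"
  proof (intro iffI ballI)
    fix z assume o: "\<forall>z\<in>L. herm z (a + k *s y) = 0" and z: "z \<in> L"
    have "herm z a + cnj k * herm z y = 0" "herm z a - k * herm z y = 0"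
      using o Hxi_orth_xi[OF L _ o] aL k y z unfolding xir by (simp_all add: herm_simps)
    then have "(cnj k + k) * herm z y = 0" by (simp add: algebra_simps)
    then have "herm z y = 0" using ksum p(2) by auto
    then show "herm z a = 0 \<and> herm z y = 0" using \<open>herm z a + cnj k * herm z y = 0\<close> by simp
  qed (simp add: herm_simps)
qed

lemma G2_mirror:
  assumes G: "G2_root_system xi R" and L0: "L0 \<in> Hxi xi" "L0 \<in> perp R"
  shows "\<exists>r\<in>Lam. herm r r = 1 \<and> Hxi xi \<inter> perp R = Hxi xi \<inter> perp {r}"
proof -
  obtain a b where ab: "a \<in> R" "b \<in> R" "herm a a = 2" "herm b b = 6" "herm a b \<noteq> 0"
    using G2_nonorthogonal_roots[OF G] by blast
  obtain u w where zs: "R \<subseteq> zspan u w" using G unfolding G2_root_system_def zspan_def by blast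
  have fixed: "x \<in> R \<Longrightarrow> lat_root xi x \<and> x \<in> Lam_fix xi" for x
    using G unfolding G2_root_system_def lat_root_def by blast
  have "lat_root xi b" using fixed ab(2) by blast
  then obtain y where y: "y \<in> Lam" "b = theta *s y" using ab(4) unfolding lat_root_def by auto
  obtain p where p: "herm a y = of_int p * theta"
    using herm_fixed_theta_multiple fixed ab(1,2) y by blast
  have hab: "herm a b = of_int (3 * p)" and hba: "herm b a = of_int (3 * p)"
    using p herm_fixed_real[of a b] herm_commute[of b a] fixed ab(1,2) theta_cnj_theta
    unfolding y(2) by (simp_all add: herm_scale_right algebra_simps)
  obtain v where "Re (herm v v) < 0" "herm v a = 0" "herm v b = 0"
    using Hxi_perp_negative[OF L0] ab(1,2) by metis
  then have "p * p \<le> 1" using negative_orth_root_pair_bound ab(3,4) hab hba by blast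
  moreover have "p \<noteq> 0" using ab(5) hab by auto
  ultimately have pp: "p * p = 1" by (smt (verit) mult_le_cancel_left1 zero_less_mult_iff)
  have "herm b b = (theta * cnj theta) * herm y y" unfolding y(2) by (simp add: herm_simps algebra_simps)
  then have "herm y y = 2" using ab(4) theta_cnj_theta by simp
  moreover have "xi y = - y" using xi_neg_of_theta_fixed y fixed[OF ab(2)] by (simp add: Lam_fix_iff)
  moreover have "a \<in> Lam_fix xi" using fixed[OF ab(1)] by blast
  ultimately obtain r where r: "r \<in> Lam" "herm r r = 1"
    and orth: "\<And>L. L \<in> Hxi xi \<Longrightarrow> (\<forall>z\<in>L. herm z r = 0) \<longleftrightarrow> (\<forall>z\<in>L. herm z a = 0 \<and> herm z y = 0)"
    using root_pair_mirror[OF _ ab(3) y(1) _ _ p pp] by blast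
  have "(of_int p * of_int p :: complex) = 1" using pp by (metis of_int_1 of_int_mult)
  then have gram: "herm a a * herm b b \<noteq> herm a b * herm b a" using ab(3,4) hab hba by simp
  have "Hxi xi \<inter> perp R = Hxi xi \<inter> perp {r}"
  proof (rule Hxi_inter_perp_eqI)
    fix L assume "L \<in> Hxi xi"
    have "herm z b = 0 \<longleftrightarrow> herm z y = 0" for z
      unfolding y(2) herm_scale_right using theta_neq_0 by simp
    then show "(\<forall>z\<in>L. \<forall>x\<in>R. herm z x = 0) \<longleftrightarrow> (\<forall>z\<in>L. \<forall>x\<in>{r}. herm z x = 0)"
      using orth[OF \<open>L \<in> Hxi xi\<close>] herm_orth_zspan[OF _ _ _ gram] zs ab(1,2) by blast
  qed
  then show ?thesis using r by blast
qed

subsection \<open>A mirror missing \<open>H\<^sup>4\<^sub>\<xi>\<close>\<close>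

lemma xi_null_eigen:
  assumes "n \<in> Lam" "herm n n = 0" "n \<noteq> 0" "herm n (xi n) = 0"
  shows "\<exists>\<mu>. xi n = \<mu> *s n"
  using null_orth_null_parallel[of n "xi n"] xi_herm[of n n] assms by simp

text \<open>If \<open>\<xi>\<close> had the null vectors \<open>e\<^sub>0 + e\<^sub>1\<close>, \<open>e\<^sub>0 - e\<^sub>1\<close>, \<open>e\<^sub>0 + \<omega>e\<^sub>1\<close> as eigenvectors, \<open>\<xi>e\<^sub>0\<close> would be
  supported on \<open>e\<^sub>1\<close>, contradicting \<open>h(\<xi>e\<^sub>0, \<xi>e\<^sub>0) = -1\<close>.\<close>

lemma exists_null_not_xi_orth:
  "\<exists>n\<in>Lam. herm n n = 0 \<and> herm n (axis 2 1) = 0 \<and> herm n (xi n) \<noteq> 0"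
proof (rule ccontr)
  define e0 where "e0 = (axis 0 1 :: cvec)"
  define e1 where "e1 = (axis 1 1 :: cvec)"
  have L: "e0 \<in> Lam" "e1 \<in> Lam" unfolding e0_def e1_def by simp_all
  assume none: "\<not> ?thesis"
  have eigen: "\<exists>\<mu>. xi n = \<mu> *s n" if n: "n \<in> {e0 + e1, e0 - e1, e0 + omega *s e1}" for n
  proof -
    have "n \<in> Lam" using n L by auto
    moreover have "herm n n = 0" "herm n (axis 2 1) = 0" "n \<noteq> 0"
      using n omega_cnj_omega by (auto simp: e0_def e1_def herm_expand axis_def cvec_eq_iff)
    moreover from calculation have "herm n (xi n) = 0" using none by blast
    ultimately show ?thesis using xi_null_eigen by blast
  qed
  define a where "a = xi e0"
  define b where "b = xi e1"
  obtain m1 m2 m3 where m1: "a + b = m1 *s (e0 + e1)" and m2: "a - b = m2 *s (e0 - e1)"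
    and m3: "a + cnj omega *s b = m3 *s (e0 + omega *s e1)"
    using eigen xi_add[OF L] xi_diff[OF L] xi_add[OF L(1), of "omega *s e1"] xi_scale[of omega e1] L
    unfolding a_def b_def by (metis Lam_scale eis_omega insertCI)
  have c: "a$0 + b$0 = m1" "a$1 + b$1 = m1" "a$0 - b$0 = m2" "a$1 - b$1 = - m2"
    "a$0 + cnj omega * b$0 = m3" "a$1 + cnj omega * b$1 = m3 * omega"
    using m1 m2 m3 by (auto simp: e0_def e1_def axis_def vec_eq_iff dest!: spec[of _ 0] spec[of _ 1])
  have ak: "a$k = 0" if "k \<noteq> 0" "k \<noteq> 1" for k
    using m1 m2 that by (auto simp: e0_def e1_def axis_def vec_eq_iff dest!: spec[of _ k])
  have "2 * b$0 = (a$0 + b$0) - (a$0 - b$0)" "2 * b$1 = (a$1 + b$1) - (a$1 - b$1)" by simp_all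
  then have "2 * b$0 = (a$1 + b$1) + (a$1 - b$1)" "2 * b$1 = (a$0 + b$0) + (a$0 - b$0)"
    unfolding c(1-4) by simp_all
  then have b: "b$0 = a$1" "b$1 = a$0" by simp_all
  have "a$1 + cnj omega * a$0 = m3 * omega" using c(6) b by simp
  also have "\<dots> = omega * a$0 + (omega * cnj omega) * a$1"
    unfolding c(5)[symmetric] b by (simp add: algebra_simps)
  finally have "(cnj omega - omega) * a$0 = 0" using omega_cnj_omega by (simp add: algebra_simps)
  moreover have "cnj omega - omega \<noteq> 0" by (simp add: omega_eq complex_eq_iff)
  ultimately have "a$0 = 0" by simp
  then have "0 \<le> Re (herm a a)" by (rule herm_self_nonneg)
  moreover have "herm a a = -1" unfolding a_def using xi_herm[OF L(1) L(1)] by (simp add: e0_def herm_axis)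
  ultimately show False by simp
qed

text \<open>For a null \<open>n \<bottom> e\<^sub>2\<close> with \<open>h(n, \<xi>n) \<noteq> 0\<close>, \<open>h(r, \<xi>r)\<close> is a quadratic polynomial in \<open>k\<close> along
  the norm-1 vectors \<open>r = e\<^sub>2 + k n\<close>, with leading coefficient \<open>h(n, \<xi>n)\<close>.\<close>

lemma exists_mirror_disjoint_Hxi: "\<exists>r\<in>Lam. herm r r = 1 \<and> Hxi xi \<inter> perp {r} = {}"
proof -
  obtain n where n: "n \<in> Lam" "herm n n = 0" "herm n (axis 2 1) = 0" "herm n (xi n) \<noteq> 0"
    using exists_null_not_xi_orth by blast
  define e2 where "e2 = (axis 2 1 :: cvec)"
  have e2: "e2 \<in> Lam" "herm e2 e2 = 1" "herm e2 n = 0"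
    using n(3) herm_commute[of e2 n] unfolding e2_def by (simp_all add: herm_axis)
  have "1 \<le> cmod (herm n (xi n))" using eis_cmod_ge_1 n by (simp add: herm_Lam)
  then obtain k :: int where k: "1 < cmod (herm e2 (xi e2) + of_int k * (herm e2 (xi n) + herm n (xi e2))
      + of_int k * of_int k * herm n (xi n))"
    using int_quadratic_exceeds_1 by blast
  have "e2 + of_int k *s n \<in> Lam" "herm (e2 + of_int k *s n) (e2 + of_int k *s n) = 1"
    using e2 n(1,2) herm_commute[of n e2] by (simp_all add: herm_simps)
  moreover have "xi (e2 + of_int k *s n) = xi e2 + of_int k *s xi n"
    using e2(1) n(1) by (simp add: xi_add xi_scale)
  then have "1 < cmod (herm (e2 + of_int k *s n) (xi (e2 + of_int k *s n)))"
    using k by (simp add: herm_simps algebra_simps)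
  ultimately show ?thesis using mirror_disjoint_Hxi by blast
qed

lemma G2_root_system_mirror:
  assumes "G2_root_system xi R"
  shows "\<exists>M. discriminant_mirror M \<and> Hxi xi \<inter> perp R = Hxi xi \<inter> M"
proof (cases "Hxi xi \<inter> perp R = {}")
  case True
  then show ?thesis using exists_mirror_disjoint_Hxi unfolding discriminant_mirror_def by auto
next
  case False
  then show ?thesis using G2_mirror[OF assms] unfolding discriminant_mirror_def by blast
qed

end

lemma root_mirror:
  assumes "lat_root xi r" "herm r r = 1 \<or> herm r r = 3"
  shows "discriminant_mirror (perp {r})"
proof (cases "herm r r = 1")
  case True
  then show ?thesis using assms(1) unfolding discriminant_mirror_def lat_root_def Lam_fix_iff by blast
next
  case False
  then obtain y where y: "y \<in> Lam" "r = theta *s y"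
    using assms unfolding lat_root_def by auto
  moreover have "herm r r = (theta * cnj theta) * herm y y" unfolding y(2) by (simp add: herm_simps algebra_simps)
  ultimately have "herm y y = 1" using False assms(2) theta_cnj_theta by simp
  then show ?thesis using y perp_scale[OF theta_neq_0] unfolding discriminant_mirror_def by metis
qed

theorem lemma6p1:
  assumes "anti_involution xi"
  shows "(\<forall>M. discriminant_mirror M \<and> M \<inter> Hxi xi \<noteq> {} \<longrightarrow>
            (\<exists>r. lat_root xi r \<and> (herm r r = 1 \<or> herm r r = 3) \<and>
                 M \<inter> Hxi xi = Hxi xi \<inter> perp {r})
          \<or> (\<exists>R. G2_root_system xi R \<and> M \<inter> Hxi xi = Hxi xi \<inter> perp R))
       \<and> (\<forall>r. lat_root xi r \<and> (herm r r = 1 \<or> herm r r = 3) \<longrightarrow>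
            (\<exists>M. discriminant_mirror M \<and> Hxi xi \<inter> perp {r} = Hxi xi \<inter> M))
       \<and> (\<forall>R. G2_root_system xi R \<longrightarrow>
            (\<exists>M. discriminant_mirror M \<and> Hxi xi \<inter> perp R = Hxi xi \<inter> M))"
proof -
  interpret anti_inv xi by (rule anti_inv.intro) (rule assms)
  show ?thesis using mirror_meets_Hxi root_mirror G2_root_system_mirror by blast
qed

end
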